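(* Let $\tilde{H}\in\mathbb{C}^{K\times L}$, let $\tau_1,\dots,\tau_L\ge0$ be the eigenvalues of $\tilde{H}^\dagger\tilde{H}$, let $N\ge1$, and let $G\in\mathbb{C}^{N\times N}$ be a Hermitian positive definite matrix. Let $W=(\tilde{H}^\dagger\tilde{H})\otimes I_N$ and let $W=V_W\Lambda_W V_W^\dagger$ be an eigendecomposition with $V_W$ unitary and $\Lambda_W$ diagonal whose $j$-th diagonal entry is $\tau_{\lceil j/N\rceil}$, $j=1,\dots,NL$. Let $\sigma_0^2>0$, $\mu>0$, and $\bar{\alpha}_j=\sigma_0^2\big(\frac1\mu-\frac{1}{\tau_{\lceil j/N\rceil}}\big)^+$ for $j=1,\dots,NL$, and put $\bar{K}=V_W\,\mathrm{diag}(\bar{\alpha}_1,\dots,\bar{\alpha}_{NL})\,V_W^\dagger$. Then the matrix $\bar{\Sigma}_A=(I_L\otimes G)^{-1}\bar{K}$ is Hermitian and positive semidefinite (hence a valid covariance matrix).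
   Context: Notation: $\dagger$ is conjugate transpose, $\otimes$ the Kronecker product, $I_n$ the $n\times n$ identity, $(a)^+=\max(a,0)$ with the convention $(\frac1\mu-\frac10)^+=0$, $\lceil\cdot\rceil$ the ceiling. In the paper's application, $G$ is the Toeplitz matrix $(G)_{n,m}=g((n-m)\delta T)$ of samples of a raised cosine pulse and $\mu$ is fixed by a power constraint, but the conclusion is stated for the matrices as given. *)

theory Defs
  imports Complex_Main "Jordan_Normal_Form.Char_Poly" "Jordan_Normal_Form.Gauss_Jordan_Elimination"
begin

definition adj :: "complex mat \<Rightarrow> complex mat" where
  "adj M = mat (dim_col M) (dim_row M) (\<lambda>(i,j). cnj (M $$ (j,i)))"

definition kron :: "complex mat \<Rightarrow> complex mat \<Rightarrow> complex mat" where
  "kron A B = mat (dim_row A * dim_row B) (dim_col A * dim_col B)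
     (\<lambda>(i,j). A $$ (i div dim_row B, j div dim_col B) * B $$ (i mod dim_row B, j mod dim_col B))"

definition hermitian_mat :: "complex mat \<Rightarrow> bool" where
  "hermitian_mat M \<longleftrightarrow> dim_row M = dim_col M \<and> adj M = M"

definition unitary_mat :: "nat \<Rightarrow> complex mat \<Rightarrow> bool" where
  "unitary_mat n U \<longleftrightarrow> U \<in> carrier_mat n n \<and> adj U * U = 1\<^sub>m n \<and> U * adj U = 1\<^sub>m n"

definition qform :: "complex mat \<Rightarrow> complex vec \<Rightarrow> complex" where
  "qform M v = (\<Sum>i<dim_vec v. cnj (vec_index v i) * vec_index (M *\<^sub>v v) i)"

definition pos_semidef :: "complex mat \<Rightarrow> bool" where
  "pos_semidef M \<longleftrightarrow> hermitian_mat M \<and>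
     (\<forall>v \<in> carrier_vec (dim_row M). Re (qform M v) \<ge> 0)"

definition pos_def :: "complex mat \<Rightarrow> bool" where
  "pos_def M \<longleftrightarrow> hermitian_mat M \<and>
     (\<forall>v \<in> carrier_vec (dim_row M). v \<noteq> 0\<^sub>v (dim_row M) \<longrightarrow> Re (qform M v) > 0)"

text \<open>(1/mu - 1/t)^+ with the convention (1/mu - 1/0)^+ = 0.\<close>
definition wf_pos :: "real \<Rightarrow> real \<Rightarrow> real" where
  "wf_pos \<mu> t = (if t = 0 then 0 else max (1/\<mu> - 1/t) 0)"

end

theory Submission
  imports Defs
begin

(* The matrix (I_L \<otimes> G)\<inverse> is the block-diagonal matrix I_L \<otimes> G\<inverse>, which is Hermitian positive
   semidefinite and commutes with W = (H\<^sup>\<dagger>H) \<otimes> I_N.  Since the diagonal entries of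
   diag(\<alpha>) only depend on the corresponding eigenvalues of W, any matrix commuting with W
   also commutes with S = V diag(sqrt \<alpha>) V\<^sup>\<dagger>, the Hermitian square root of K.  Hence
   (I_L \<otimes> G)\<inverse> K = S (I_L \<otimes> G)\<inverse> S is a congruence of a positive semidefinite matrix. *)

lemma sum_lessThan_mult_split:
  fixes m q :: nat
  shows "(\<Sum>k<m * q. f k) = (\<Sum>a<m. \<Sum>b<q. f (a * q + b))"
proof -
  have "(\<Sum>k<m * q. f k) = (\<Sum>a<m. \<Sum>k\<in>{a * q..<a * q + q}. f k)"
    by (rule sum.nat_group [symmetric])
  also have "\<dots> = (\<Sum>a<m. \<Sum>b<q. f (a * q + b))"
  proof (rule sum.cong [OF refl])
    fix a
    show "(\<Sum>k\<in>{a * q..<a * q + q}. f k) = (\<Sum>b<q. f (a * q + b))"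
      using sum.shift_bounds_nat_ivl [of f 0 "a * q" q] by (simp add: lessThan_atLeast0 add.commute)
  qed
  finally show ?thesis .
qed

lemma mult_carrier_mat_square [simp]:
  "A \<in> carrier_mat n n \<Longrightarrow> B \<in> carrier_mat n n \<Longrightarrow> A * B \<in> carrier_mat n n"
  by (rule mult_carrier_mat)

lemma div_mod_lt_of_lt_mult:
  fixes i p q :: nat
  assumes "i < p * q"
  shows "i div q < p" "i mod q < q"
proof -
  have "q > 0" using assms by (cases q) auto
  then show "i div q < p" "i mod q < q" using assms by (simp_all add: less_mult_imp_div_less)
qed

lemma mult_add_lt_mult:
  fixes a r p q :: nat
  assumes "a < p" "r < q"
  shows "a * q + r < p * q"
proof -
  have "a * q + r < (a + 1) * q" using assms by simp
  also have "\<dots> \<le> p * q" using assms by (intro mult_le_mono1) simp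
  finally show ?thesis .
qed

lemma dim_adj [simp]: "dim_row (adj A) = dim_col A" "dim_col (adj A) = dim_row A"
  by (auto simp: adj_def)

lemma adj_carrier_mat [simp]: "A \<in> carrier_mat m n \<Longrightarrow> adj A \<in> carrier_mat n m"
  by (auto simp: adj_def)

lemma index_adj [simp]: "i < dim_col A \<Longrightarrow> j < dim_row A \<Longrightarrow> adj A $$ (i, j) = cnj (A $$ (j, i))"
  by (auto simp: adj_def)

lemma adj_adj [simp]: "adj (adj A) = A"
  by (rule eq_matI) (auto simp: adj_def)

lemma adj_mult:
  assumes "A \<in> carrier_mat m n" "B \<in> carrier_mat n r"
  shows "adj (A * B) = adj B * adj A"
  by (rule eq_matI) (use assms in \<open>auto simp: adj_def scalar_prod_def cnj_sum intro!: sum.cong\<close>)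

lemma adj_one [simp]: "adj (1\<^sub>m n) = 1\<^sub>m n"
  by (rule eq_matI) (auto simp: adj_def)

lemma adj_mat_diag_real: "adj (mat_diag n (\<lambda>j. complex_of_real (f j))) = mat_diag n (\<lambda>j. complex_of_real (f j))"
  by (rule eq_matI) (auto simp: adj_def mat_diag_def)

section \<open>Kronecker products\<close>

lemma dim_kron [simp]:
  "dim_row (kron A B) = dim_row A * dim_row B" "dim_col (kron A B) = dim_col A * dim_col B"
  by (auto simp: kron_def)

lemma index_kron [simp]:
  "i < dim_row A * dim_row B \<Longrightarrow> j < dim_col A * dim_col B \<Longrightarrow>
   kron A B $$ (i, j) = A $$ (i div dim_row B, j div dim_col B) * B $$ (i mod dim_row B, j mod dim_col B)"
  by (auto simp: kron_def)

lemma kron_carrier_mat [simp]: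
  "A \<in> carrier_mat m n \<Longrightarrow> B \<in> carrier_mat p q \<Longrightarrow> kron A B \<in> carrier_mat (m * p) (n * q)"
  by (auto simp: kron_def)

lemma kron_mult:
  assumes A: "A \<in> carrier_mat m n" and B: "B \<in> carrier_mat p q"
    and C: "C \<in> carrier_mat n r" and D: "D \<in> carrier_mat q s"
  shows "kron A B * kron C D = kron (A * C) (B * D)"
proof (rule eq_matI)
  fix i j
  assume "i < dim_row (kron (A * C) (B * D))" "j < dim_col (kron (A * C) (B * D))"
  then have i: "i < m * p" and j: "j < r * s" using A B C D by auto
  have "(kron A B * kron C D) $$ (i, j) = (\<Sum>k<n * q. A $$ (i div p, k div q) * B $$ (i mod p, k mod q) *
         (C $$ (k div q, j div s) * D $$ (k mod q, j mod s)))"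
    using A B C D i j by (simp add: scalar_prod_def lessThan_atLeast0 [symmetric])
  also have "\<dots> = (\<Sum>a<n. \<Sum>b<q. A $$ (i div p, a) * B $$ (i mod p, b) * (C $$ (a, j div s) * D $$ (b, j mod s)))"
    by (subst sum_lessThan_mult_split) (auto intro!: sum.cong)
  also have "\<dots> = (\<Sum>a<n. A $$ (i div p, a) * C $$ (a, j div s)) * (\<Sum>b<q. B $$ (i mod p, b) * D $$ (b, j mod s))"
    by (simp add: sum_product algebra_simps)
  also have "\<dots> = kron (A * C) (B * D) $$ (i, j)"
    using A B C D i j div_mod_lt_of_lt_mult [OF i] div_mod_lt_of_lt_mult [OF j]
    by (simp add: scalar_prod_def lessThan_atLeast0)
  finally show "(kron A B * kron C D) $$ (i, j) = kron (A * C) (B * D) $$ (i, j)" .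
qed (use A B C D in auto)

lemma kron_one_one: "kron (1\<^sub>m m) (1\<^sub>m n) = 1\<^sub>m (m * n)"
proof (rule eq_matI)
  fix i j assume "i < dim_row (1\<^sub>m (m * n))" "j < dim_col (1\<^sub>m (m * n))"
  then have ij: "i < m * n" "j < m * n" by auto
  have "(i div n = j div n \<and> i mod n = j mod n) = (i = j)"
    by (metis div_mult_mod_eq)
  then show "kron (1\<^sub>m m) (1\<^sub>m n) $$ (i, j) = 1\<^sub>m (m * n) $$ (i, j)"
    using ij div_mod_lt_of_lt_mult [OF ij(1)] div_mod_lt_of_lt_mult [OF ij(2)] by auto
qed auto

lemma adj_kron: "adj (kron A B) = kron (adj A) (adj B)"
proof (rule eq_matI)
  fix i j assume "i < dim_row (kron (adj A) (adj B))" "j < dim_col (kron (adj A) (adj B))"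
  then have "i < dim_col A * dim_col B" "j < dim_row A * dim_row B" by auto
  then show "adj (kron A B) $$ (i, j) = kron (adj A) (adj B) $$ (i, j)"
    using div_mod_lt_of_lt_mult by auto
qed auto

lemma kron_one_commute:
  assumes A: "A \<in> carrier_mat m m" and B: "B \<in> carrier_mat n n"
  shows "kron (1\<^sub>m m) B * kron A (1\<^sub>m n) = kron A (1\<^sub>m n) * kron (1\<^sub>m m) B"
  using A B by (simp add: kron_mult [of _ m m _ n n _ m _ n])

section \<open>Positive semidefinite matrices\<close>

definition cinner :: "complex vec \<Rightarrow> complex vec \<Rightarrow> complex" where
  "cinner u w = (\<Sum>i<dim_vec u. cnj (u $ i) * w $ i)"

lemma qform_cinner: "qform M v = cinner v (M *\<^sub>v v)"
  by (simp add: qform_def cinner_def)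

lemma cinner_commute_cnj: "dim_vec u = dim_vec w \<Longrightarrow> cinner w u = cnj (cinner u w)"
  by (simp add: cinner_def cnj_sum mult.commute)

lemma cinner_adj:
  assumes A: "A \<in> carrier_mat n m" and v: "v \<in> carrier_vec m" and w: "w \<in> carrier_vec n"
  shows "cinner v (adj A *\<^sub>v w) = cinner (A *\<^sub>v v) w"
proof -
  have "cinner v (adj A *\<^sub>v w) = (\<Sum>i<m. cnj (v $ i) * (\<Sum>k<n. cnj (A $$ (k, i)) * w $ k))"
    using A v w by (simp add: cinner_def scalar_prod_def lessThan_atLeast0)
  also have "\<dots> = (\<Sum>k<n. \<Sum>i<m. cnj (v $ i) * cnj (A $$ (k, i)) * w $ k)"
    by (simp add: sum_distrib_left mult.assoc) (rule sum.swap)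
  also have "\<dots> = (\<Sum>k<n. cnj (\<Sum>i<m. A $$ (k, i) * v $ i) * w $ k)"
    by (simp add: cnj_sum sum_distrib_left sum_distrib_right ac_simps)
  also have "\<dots> = cinner (A *\<^sub>v v) w"
    using A v w by (simp add: cinner_def scalar_prod_def lessThan_atLeast0)
  finally show ?thesis .
qed

lemma qform_congruence:
  assumes "S \<in> carrier_mat n n" "P \<in> carrier_mat n n" "v \<in> carrier_vec n"
  shows "qform (adj S * P * S) v = qform P (S *\<^sub>v v)"
proof -
  have "(adj S * P * S) *\<^sub>v v = adj S *\<^sub>v (P *\<^sub>v (S *\<^sub>v v))"
    using assms by (simp add: assoc_mult_mat_vec [of _ n n _ n])
  then show ?thesis
    using assms by (simp add: qform_cinner cinner_adj)
qed

lemma pos_def_imp_pos_semidef: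
  assumes "pos_def M"
  shows "pos_semidef M"
proof -
  have "Re (qform M v) \<ge> 0" if "v \<in> carrier_vec (dim_row M)" for v
  proof (cases "v = 0\<^sub>v (dim_row M)")
    case True
    then show ?thesis by (simp add: qform_def)
  next
    case False
    then show ?thesis using assms that by (simp add: pos_def_def less_imp_le)
  qed
  then show ?thesis using assms by (simp add: pos_def_def pos_semidef_def)
qed

lemma pos_semidef_congruence:
  assumes S: "S \<in> carrier_mat n n" and P: "P \<in> carrier_mat n n" "pos_semidef P"
  shows "pos_semidef (adj S * P * S)"
proof -
  have "adj (adj S * P * S) = adj S * P * S"
    using S P by (simp add: adj_mult [of _ n n _ n] pos_semidef_def hermitian_mat_def
        assoc_mult_mat [of _ n n _ n _ n])
  moreover have "Re (qform (adj S * P * S) v) \<ge> 0" if "v \<in> carrier_vec n" for v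
    using S P that by (simp add: qform_congruence pos_semidef_def)
  ultimately show ?thesis
    using S P by (simp add: pos_semidef_def hermitian_mat_def)
qed

lemma pos_semidef_inverse:
  assumes A: "A \<in> carrier_mat n n" "pos_semidef A"
    and B: "B \<in> carrier_mat n n" and inv: "A * B = 1\<^sub>m n" "B * A = 1\<^sub>m n"
  shows "pos_semidef B"
proof -
  have adjA: "adj A = A" using A by (simp add: pos_semidef_def hermitian_mat_def)
  have "adj B * A = 1\<^sub>m n"
    using adj_mult [OF A(1) B] inv adjA by simp
  then have adjB: "adj B = B"
    using A B inv assoc_mult_mat [of "adj B" n n A n B n] by simp
  have "Re (qform B w) \<ge> 0" if w: "w \<in> carrier_vec n" for w
  proof -
    define u where "u = B *\<^sub>v w"
    have u: "u \<in> carrier_vec n" using B w by (simp add: u_def)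
    have "A *\<^sub>v u = w" using A B w inv by (simp add: u_def flip: assoc_mult_mat_vec)
    then have "qform B w = cinner (A *\<^sub>v u) u" by (simp add: qform_cinner u_def)
    also have "\<dots> = cnj (cinner u (A *\<^sub>v u))" using A u by (intro cinner_commute_cnj) simp
    finally show ?thesis using A u by (simp add: pos_semidef_def qform_cinner)
  qed
  then show ?thesis using B adjB by (simp add: pos_semidef_def hermitian_mat_def)
qed

lemma kron_one_mult_vec_index:
  assumes G: "G \<in> carrier_mat n n" and v: "v \<in> carrier_vec (m * n)" and a: "a < m" and r: "r < n"
  shows "(kron (1\<^sub>m m) G *\<^sub>v v) $ (a * n + r) = (G *\<^sub>v vec n (\<lambda>s. v $ (a * n + s))) $ r"
proof -
  have i: "a * n + r < m * n" using a r by (rule mult_add_lt_mult)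
  have "(kron (1\<^sub>m m) G *\<^sub>v v) $ (a * n + r) = (\<Sum>k<m * n. kron (1\<^sub>m m) G $$ (a * n + r, k) * v $ k)"
    using G v i by (simp add: scalar_prod_def lessThan_atLeast0)
  also have "\<dots> = (\<Sum>b<m. \<Sum>s<n. kron (1\<^sub>m m) G $$ (a * n + r, b * n + s) * v $ (b * n + s))"
    by (rule sum_lessThan_mult_split)
  also have "\<dots> = (\<Sum>b<m. if b = a then (\<Sum>s<n. G $$ (r, s) * v $ (a * n + s)) else 0)"
    using G a r i by (intro sum.cong refl) (auto simp: mult_add_lt_mult)
  also have "\<dots> = (G *\<^sub>v vec n (\<lambda>s. v $ (a * n + s))) $ r"
    using G a r by (simp add: scalar_prod_def lessThan_atLeast0)
  finally show ?thesis .
qed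

lemma qform_kron_one:
  assumes G: "G \<in> carrier_mat n n" and v: "v \<in> carrier_vec (m * n)"
  shows "qform (kron (1\<^sub>m m) G) v = (\<Sum>a<m. qform G (vec n (\<lambda>s. v $ (a * n + s))))"
proof -
  have "qform (kron (1\<^sub>m m) G) v = (\<Sum>a<m. \<Sum>r<n. cnj (v $ (a * n + r)) * (kron (1\<^sub>m m) G *\<^sub>v v) $ (a * n + r))"
    using v by (simp add: qform_def sum_lessThan_mult_split)
  also have "\<dots> = (\<Sum>a<m. qform G (vec n (\<lambda>s. v $ (a * n + s))))"
    using G v by (auto simp: qform_def kron_one_mult_vec_index intro!: sum.cong)
  finally show ?thesis .
qed

lemma pos_semidef_kron_one:
  assumes G: "G \<in> carrier_mat n n" "pos_semidef G"
  shows "pos_semidef (kron (1\<^sub>m m) G)"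
proof -
  have "adj (kron (1\<^sub>m m) G) = kron (1\<^sub>m m) G"
    using G by (simp add: adj_kron pos_semidef_def hermitian_mat_def)
  moreover have "Re (qform (kron (1\<^sub>m m) G) v) \<ge> 0" if "v \<in> carrier_vec (m * n)" for v
    using G that by (simp add: qform_kron_one pos_semidef_def sum_nonneg)
  ultimately show ?thesis
    using G by (simp add: pos_semidef_def hermitian_mat_def)
qed

lemma mat_inverse_eqI:
  fixes A B :: "'a :: field mat"
  assumes A: "A \<in> carrier_mat n n" and B: "B \<in> carrier_mat n n"
    and inv: "A * B = 1\<^sub>m n" "B * A = 1\<^sub>m n"
  shows "mat_inverse A = Some B"
proof -
  have "A \<in> Units (ring_mat TYPE('a) n ())"
    using A B inv by (auto simp: Units_def ring_mat_def)
  then obtain B' where B': "mat_inverse A = Some B'"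
    using mat_inverse(1) [OF A] by fastforce
  then have "B' \<in> carrier_mat n n" "B' * A = 1\<^sub>m n"
    using mat_inverse(2) [OF A] by auto
  then have "B' = B"
    using A B inv assoc_mult_mat [of B' n n A n B n] by simp
  with B' show ?thesis by simp
qed

lemma pos_def_det_nonzero:
  assumes G: "G \<in> carrier_mat n n" "pos_def G"
  shows "det G \<noteq> 0"
proof
  assume "det G = 0"
  then obtain v where v: "v \<in> carrier_vec n" "v \<noteq> 0\<^sub>v n" "G *\<^sub>v v = 0\<^sub>v n"
    using det_0_iff_vec_prod_zero [OF G(1)] by blast
  then have "qform G v = 0" by (simp add: qform_def)
  with G v show False unfolding pos_def_def by auto
qed

lemma mat_inverse_kron_one:
  assumes G: "G \<in> carrier_mat n n" and Gi: "Gi \<in> carrier_mat n n"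
    and inv: "G * Gi = 1\<^sub>m n" "Gi * G = 1\<^sub>m n"
  shows "mat_inverse (kron (1\<^sub>m m) G) = Some (kron (1\<^sub>m m) Gi)"
  using assms by (intro mat_inverse_eqI [of _ "m * n"])
    (simp_all add: kron_mult [of _ m m _ n n _ m _ n] kron_one_one)

lemma pos_def_mat_inverse_kron_one:
  assumes G: "G \<in> carrier_mat n n" "pos_def G"
  obtains Gi where "the (mat_inverse (kron (1\<^sub>m m) G)) = kron (1\<^sub>m m) Gi"
    "Gi \<in> carrier_mat n n" "pos_semidef Gi"
proof -
  have "G \<in> Units (ring_mat TYPE(complex) n ())"
    using det_non_zero_imp_unit [OF G(1) pos_def_det_nonzero [OF G]] .
  then obtain Gi where "mat_inverse G = Some Gi"
    using mat_inverse(1) [OF G(1)] by fastforce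
  then have Gi: "G * Gi = 1\<^sub>m n" "Gi * G = 1\<^sub>m n" "Gi \<in> carrier_mat n n"
    using mat_inverse(2) [OF G(1)] by auto
  show ?thesis
  proof
    show "the (mat_inverse (kron (1\<^sub>m m) G)) = kron (1\<^sub>m m) Gi"
      using mat_inverse_kron_one [OF G(1) Gi(3,1,2)] by simp
    show "pos_semidef Gi"
      using pos_semidef_inverse [OF G(1) pos_def_imp_pos_semidef [OF G(2)] Gi(3,1,2)] .
  qed (rule Gi(3))
qed

section \<open>Functions of unitarily diagonalised matrices\<close>

lemma unitary_mat_adj: "unitary_mat n V \<Longrightarrow> unitary_mat n (adj V)"
  by (auto simp: unitary_mat_def)

lemma unitary_conj_mult:
  assumes V: "unitary_mat n V" and A: "A \<in> carrier_mat n n" and B: "B \<in> carrier_mat n n"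
  shows "(V * A * adj V) * (V * B * adj V) = V * (A * B) * adj V"
proof -
  from V have Vc: "V \<in> carrier_mat n n" and VV: "adj V * V = 1\<^sub>m n"
    by (auto simp: unitary_mat_def)
  have "(V * A * adj V) * (V * B * adj V) = V * A * (adj V * V) * B * adj V"
    using Vc adj_carrier_mat [OF Vc] A B by (simp add: assoc_mult_mat [of _ n n _ n _ n])
  then show ?thesis
    using Vc A B VV by simp
qed

lemma unitary_conj_cancel:
  assumes V: "unitary_mat n V" and A: "A \<in> carrier_mat n n"
  shows "adj V * (V * A * adj V) * V = A"
proof -
  from V have Vc: "V \<in> carrier_mat n n" and VV: "adj V * V = 1\<^sub>m n"
    by (auto simp: unitary_mat_def)
  have "adj V * (V * A * adj V) * V = (adj V * V) * A * (adj V * V)"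
    using Vc adj_carrier_mat [OF Vc] A by (simp add: assoc_mult_mat [of _ n n _ n _ n])
  then show ?thesis
    using A VV by simp
qed

lemma adj_unitary_conj:
  assumes "V \<in> carrier_mat n n" "A \<in> carrier_mat n n"
  shows "adj (V * A * adj V) = V * adj A * adj V"
  using assms adj_carrier_mat [OF assms(1)] adj_carrier_mat [OF assms(2)]
  by (simp add: adj_mult [of _ n n _ n] assoc_mult_mat [of _ n n _ n _ n])

lemma commute_mat_diag_fun:
  fixes B :: "'a :: idom mat"
  assumes B: "B \<in> carrier_mat n n"
    and comm: "B * mat_diag n e = mat_diag n e * B"
    and factors: "\<And>i j. i < n \<Longrightarrow> j < n \<Longrightarrow> e i = e j \<Longrightarrow> d i = d j"
  shows "B * mat_diag n d = mat_diag n d * B"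
proof (rule eq_matI)
  fix i j assume "i < dim_row (mat_diag n d * B)" "j < dim_col (mat_diag n d * B)"
  then have ij: "i < n" "j < n" using B by (auto simp: mat_diag_def)
  have entry: "B $$ (i, j) * e j = e i * B $$ (i, j)"
    using arg_cong [OF comm, of "\<lambda>M. M $$ (i, j)"] B ij
    by (simp add: mat_diag_mult_left [of _ n n] mat_diag_mult_right [of _ n n])
  have "B $$ (i, j) * d j = d i * B $$ (i, j)"
  proof (cases "B $$ (i, j) = 0")
    case False
    have "B $$ (i, j) * e j = B $$ (i, j) * e i" using entry by (simp add: mult.commute)
    then have "e i = e j" using False by simp
    then show ?thesis using factors [OF ij] by (simp add: mult.commute)
  qed simp
  then show "(B * mat_diag n d) $$ (i, j) = (mat_diag n d * B) $$ (i, j)"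
    using B ij by (simp add: mat_diag_mult_left [of _ n n] mat_diag_mult_right [of _ n n])
qed (use B in \<open>auto simp: mat_diag_def\<close>)

lemma commute_unitary_diag_fun:
  assumes V: "unitary_mat n V" and P: "P \<in> carrier_mat n n"
    and comm: "P * (V * mat_diag n e * adj V) = V * mat_diag n e * adj V * P"
    and factors: "\<And>i j. i < n \<Longrightarrow> j < n \<Longrightarrow> e i = e j \<Longrightarrow> d i = d j"
  shows "P * (V * mat_diag n d * adj V) = V * mat_diag n d * adj V * P"
proof -
  have V': "unitary_mat n (adj V)" using V by (rule unitary_mat_adj)
  have Vc: "V \<in> carrier_mat n n" using V by (simp add: unitary_mat_def)
  define B where "B = adj V * P * V"
  define W where "W = V * mat_diag n e * adj V"
  have Bc: "B \<in> carrier_mat n n" and Wc: "W \<in> carrier_mat n n"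
    using P Vc by (simp_all add: B_def W_def)
  have P_eq: "P = V * B * adj V"
    using unitary_conj_cancel [OF V' P] by (simp add: B_def)
  have "B * mat_diag n e = (adj V * P * V) * (adj V * W * V)"
    using unitary_conj_cancel [OF V mat_diag_dim] by (simp add: B_def W_def)
  also have "\<dots> = adj V * (W * P) * V"
    using unitary_conj_mult [OF V' P Wc] comm by (simp add: W_def)
  also have "\<dots> = (adj V * W * V) * (adj V * P * V)"
    using unitary_conj_mult [OF V' Wc P] by simp
  also have "\<dots> = mat_diag n e * B"
    using unitary_conj_cancel [OF V mat_diag_dim] by (simp add: B_def W_def)
  finally have "B * mat_diag n d = mat_diag n d * B"
    by (rule commute_mat_diag_fun [OF Bc _ factors])
  then show ?thesis
    using unitary_conj_mult [OF V Bc mat_diag_dim] unitary_conj_mult [OF V mat_diag_dim Bc]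
    by (simp add: P_eq)
qed

lemma pos_semidef_mult_commuting_square:
  assumes P: "P \<in> carrier_mat n n" "pos_semidef P"
    and S: "S \<in> carrier_mat n n" "adj S = S" and comm: "P * S = S * P"
  shows "pos_semidef (P * (S * S))"
proof -
  have "P * (S * S) = (P * S) * S"
    by (rule assoc_mult_mat [OF P(1) S(1) S(1), symmetric])
  also have "\<dots> = adj S * P * S"
    by (simp only: comm S(2))
  finally show ?thesis
    using pos_semidef_congruence [OF S(1) P] by simp
qed

lemma pos_semidef_mult_unitary_diag_fun:
  assumes V: "unitary_mat n V" and P: "P \<in> carrier_mat n n" "pos_semidef P"
    and comm: "P * (V * mat_diag n e * adj V) = V * mat_diag n e * adj V * P"
    and factors: "\<And>i j. i < n \<Longrightarrow> j < n \<Longrightarrow> e i = e j \<Longrightarrow> f i = f j"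
    and nonneg: "\<And>i. f i \<ge> 0"
  shows "pos_semidef (P * (V * mat_diag n (\<lambda>j. complex_of_real (f j)) * adj V))"
proof -
  have Vc: "V \<in> carrier_mat n n" using V by (simp add: unitary_mat_def)
  define D where "D = mat_diag n (\<lambda>j. complex_of_real (sqrt (f j)))"
  define S where "S = V * D * adj V"
  have Sc: "S \<in> carrier_mat n n" using Vc by (simp add: S_def D_def)
  have "adj S = S"
    using Vc by (simp add: S_def D_def adj_unitary_conj adj_mat_diag_real)
  moreover have "P * S = S * P"
    unfolding S_def D_def using V P(1) comm by (rule commute_unitary_diag_fun) (metis factors)
  moreover have "S * S = V * mat_diag n (\<lambda>j. complex_of_real (f j)) * adj V"
    using unitary_conj_mult [OF V, of D D] nonneg
    by (simp add: S_def D_def flip: of_real_mult)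
  ultimately show ?thesis
    using pos_semidef_mult_commuting_square [OF P Sc] by metis
qed

theorem lemma5:
  fixes H G V :: "complex mat" and K L N :: nat and \<tau> :: "nat \<Rightarrow> real"
    and \<sigma>0 \<mu> :: real
  assumes H: "H \<in> carrier_mat K L"
    and tau_nonneg: "\<forall>i<L. \<tau> i \<ge> 0"
    and tau_eig: "char_poly (adj H * H) = (\<Prod>i<L. [:- complex_of_real (\<tau> i), 1:])"
    and N: "N \<ge> 1"
    and G: "G \<in> carrier_mat N N" "pos_def G"
    and V: "unitary_mat (N * L) V"
    and W: "kron (adj H * H) (1\<^sub>m N)
              = V * mat_diag (N * L) (\<lambda>j. complex_of_real (\<tau> (j div N))) * adj V"
    and sigma: "\<sigma>0\<^sup>2 > 0"
    and mu: "\<mu> > 0"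
  shows "pos_semidef (the (mat_inverse (kron (1\<^sub>m L) G)) *
           (V * mat_diag (N * L) (\<lambda>j. complex_of_real (\<sigma>0\<^sup>2 * wf_pos \<mu> (\<tau> (j div N)))) * adj V))"
proof -
  obtain Gi where Gi: "the (mat_inverse (kron (1\<^sub>m L) G)) = kron (1\<^sub>m L) Gi"
    "Gi \<in> carrier_mat N N" "pos_semidef Gi"
    using pos_def_mat_inverse_kron_one [OF G] .
  have AH: "adj H * H \<in> carrier_mat L L" using H by (simp add: mult_carrier_mat [of _ L K])
  show ?thesis
    unfolding Gi(1)
  proof (rule pos_semidef_mult_unitary_diag_fun [OF V])
    show "kron (1\<^sub>m L) Gi \<in> carrier_mat (N * L) (N * L)"
      using kron_carrier_mat [OF one_carrier_mat Gi(2), of L] by (simp add: mult.commute)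
    show "pos_semidef (kron (1\<^sub>m L) Gi)"
      using Gi(2,3) by (rule pos_semidef_kron_one)
    show "kron (1\<^sub>m L) Gi * (V * mat_diag (N * L) (\<lambda>j. complex_of_real (\<tau> (j div N))) * adj V)
        = V * mat_diag (N * L) (\<lambda>j. complex_of_real (\<tau> (j div N))) * adj V * kron (1\<^sub>m L) Gi"
      using kron_one_commute [OF AH Gi(2)] by (simp flip: W)
  qed (auto simp: wf_pos_def)
qed

end
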